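(* For $\theta^*\in\Theta=\mathbb{R}^p$ let $P_{\theta^*}=\mathcal{N}(\theta^*,I_p)$, and consider data $X_1,\dots,X_n\stackrel{i.i.d.}{\sim}P$ where $W(P,P_{\theta^*})\le\epsilon$. There exist constants $C,c>0$ such that $$\inf_{\widehat\theta}\sup_{\theta^*\in\Theta,\;P:W(P_{\theta^*},P)\le\epsilon}\mathbb{P}\left(\|\theta^*-\widehat\theta\|_2\ge C\left(\sqrt{\frac pn}\vee\epsilon\right)\right)\ge c,$$ the infimum being over all estimators $\widehat\theta$ based on $X_1,\dots,X_n$.
   Context: $W$ is the Wasserstein-1 distance $W(P,Q)=\inf_\Pi\mathbb{E}_\Pi\|X-Y\|_2$ over couplings. $a\vee b=\max(a,b)$. *)

theory Defs
  imports "HOL-Probability.Probability"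
begin

text \<open>R^p is represented by the finite product measure over the index set {..<p}
  (elements are functions nat => real, extensional outside {..<p}).\<close>

definition Rp :: "nat \<Rightarrow> (nat \<Rightarrow> real) measure" where
  "Rp p = PiM {..<p} (\<lambda>_. lborel)"

definition euclid_dist :: "nat \<Rightarrow> (nat \<Rightarrow> real) \<Rightarrow> (nat \<Rightarrow> real) \<Rightarrow> real" where
  "euclid_dist p x y = sqrt (\<Sum>i<p. (x i - y i)\<^sup>2)"

definition gauss :: "nat \<Rightarrow> (nat \<Rightarrow> real) \<Rightarrow> (nat \<Rightarrow> real) measure" where
  "gauss p \<theta> = PiM {..<p} (\<lambda>i. density lborel (normal_density (\<theta> i) 1))"

definition couplings :: "nat \<Rightarrow> (nat \<Rightarrow> real) measure \<Rightarrow> (nat \<Rightarrow> real) measure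
    \<Rightarrow> ((nat \<Rightarrow> real) \<times> (nat \<Rightarrow> real)) measure set" where
  "couplings p P Q = {Q2. sets Q2 = sets (Rp p \<Otimes>\<^sub>M Rp p) \<and> prob_space Q2
      \<and> distr Q2 (Rp p) fst = P \<and> distr Q2 (Rp p) snd = Q}"

definition wasserstein1 :: "nat \<Rightarrow> (nat \<Rightarrow> real) measure \<Rightarrow> (nat \<Rightarrow> real) measure \<Rightarrow> ennreal" where
  "wasserstein1 p P Q = (INF Q2 \<in> couplings p P Q.
      \<integral>\<^sup>+ z. ennreal (euclid_dist p (fst z) (snd z)) \<partial>Q2)"

definition robust_model :: "nat \<Rightarrow> (nat \<Rightarrow> real) \<Rightarrow> real \<Rightarrow> (nat \<Rightarrow> real) measure set" where
  "robust_model p \<theta> \<epsilon> = {P. prob_space P \<and> sets P = sets (Rp p)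
      \<and> wasserstein1 p (gauss p \<theta>) P \<le> ennreal \<epsilon>}"

definition sample :: "nat \<Rightarrow> (nat \<Rightarrow> real) measure \<Rightarrow> (nat \<Rightarrow> nat \<Rightarrow> real) measure" where
  "sample n P = PiM {..<n} (\<lambda>_. P)"

definition estimators :: "nat \<Rightarrow> nat \<Rightarrow> ((nat \<Rightarrow> nat \<Rightarrow> real) \<Rightarrow> (nat \<Rightarrow> real)) set" where
  "estimators p n = PiM {..<n} (\<lambda>_. Rp p) \<rightarrow>\<^sub>M Rp p"

end

theory Submission
  imports Defs
begin

text \<open>Two lower bounds are combined, according to which of \<open>sqrt (p / n)\<close> and \<open>\<epsilon>\<close>
  dominates.

  For the statistical rate, put the prior \<open>N(0, I\<^sub>p / n)\<close> on \<open>\<theta>\<close>. Given the data, the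
  coordinates of \<open>\<theta>\<close> are independent a posteriori, each Gaussian with precision \<open>2 n\<close>, so
  damping the posterior by \<open>exp (- 3 n (\<theta>\<^sub>i - b\<^sub>i)\<^sup>2)\<close> costs a factor
  \<open>sqrt (2 n / 8 n) = 1 / 2\<close> per coordinate. As the indicator of \<open>\<parallel>\<theta> - \<theta>h\<parallel> < r\<close> is at most
  \<open>exp (3 n (r\<^sup>2 - \<parallel>\<theta> - \<theta>h\<parallel>\<^sup>2))\<close>, the prior average of \<open>P\<^sub>\<theta>(\<parallel>\<theta> - \<theta>h\<parallel> < r)\<close> is at most
  \<open>exp (3 n r\<^sup>2) / 2\<^sup>p\<close>, which is below \<open>4 / 5\<close> for \<open>r = sqrt (p / n) / 4\<close>. Hence some \<open>\<theta>\<close>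
  is missed by \<open>r\<close> with probability above \<open>1 / 5\<close>.

  For the contamination rate, the single distribution \<open>N(0, I\<^sub>p)\<close> lies within Wasserstein
  distance \<open>\<epsilon>\<close> of both \<open>N(0, I\<^sub>p)\<close> and \<open>N(\<epsilon> e\<^sub>0, I\<^sub>p)\<close>. Their centres are \<open>\<epsilon>\<close> apart, so
  no estimate is within \<open>\<epsilon> / 4\<close> of both, and one of them is missed with probability at
  least \<open>1 / 2\<close>.\<close>

section \<open>Products of measures with densities\<close>

lemma indicator_PiE_eq_prod:
  assumes "finite I" and "x \<in> extensional I"
  shows "indicator (PiE I A) x = (\<Prod>i\<in>I. indicator (A i) (x i) :: ennreal)"
proof (cases "x \<in> PiE I A")
  case False
  with assms(2) obtain i where "i \<in> I" "x i \<notin> A i" by (auto simp: PiE_def)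
  then have "(\<Prod>i\<in>I. indicator (A i) (x i) :: ennreal) = 0"
    using assms(1) by (intro prod_zero bexI[of _ i]) auto
  with False show ?thesis by simp
qed (simp add: PiE_iff)

lemma PiM_density:
  fixes M :: "'i \<Rightarrow> 'a measure" and f :: "'i \<Rightarrow> 'a \<Rightarrow> ennreal"
  assumes I: "finite I"
    and M: "\<And>i. sigma_finite_measure (M i)"
    and Mf: "\<And>i. sigma_finite_measure (density (M i) (f i))"
    and f[measurable]: "\<And>i. f i \<in> borel_measurable (M i)"
  shows "PiM I (\<lambda>i. density (M i) (f i)) = density (PiM I M) (\<lambda>x. \<Prod>i\<in>I. f i (x i))"
proof -
  interpret D: product_sigma_finite "\<lambda>i. density (M i) (f i)"
    unfolding product_sigma_finite_def using Mf by auto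
  interpret P: product_sigma_finite M
    unfolding product_sigma_finite_def using M by auto
  show ?thesis
  proof (rule D.PiM_eqI[OF I, symmetric])
    show "sets (density (PiM I M) (\<lambda>x. \<Prod>i\<in>I. f i (x i))) = sets (PiM I (\<lambda>i. density (M i) (f i)))"
      by (simp cong: sets_PiM_cong)
  next
    fix A assume "\<And>i. i \<in> I \<Longrightarrow> A i \<in> sets (density (M i) (f i))"
    then have A: "\<And>i. i \<in> I \<Longrightarrow> A i \<in> sets (M i)" by simp
    then have "emeasure (density (PiM I M) (\<lambda>x. \<Prod>i\<in>I. f i (x i))) (PiE I A)
        = (\<integral>\<^sup>+x. (\<Prod>i\<in>I. f i (x i) * indicator (A i) (x i)) \<partial>PiM I M)"
      using I by (simp add: emeasure_density sets_PiM_I_finite)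
        (auto simp: space_PiM PiE_iff indicator_PiE_eq_prod[OF I] prod.distrib intro!: nn_integral_cong)
    also have "\<dots> = (\<Prod>i\<in>I. emeasure (density (M i) (f i)) (A i))"
      using I A by (subst P.product_nn_integral_prod) (auto intro!: prod.cong simp: emeasure_density)
    finally show "emeasure (density (PiM I M) (\<lambda>x. \<Prod>i\<in>I. f i (x i))) (PiE I A)
        = (\<Prod>i\<in>I. emeasure (density (M i) (f i)) (A i))" .
  qed
qed

lemma distr_PiM_componentwise:
  fixes f :: "'i \<Rightarrow> 'a \<Rightarrow> 'b"
  assumes I: "finite I" and M: "\<And>i. prob_space (M i)"
    and f[measurable]: "\<And>i. f i \<in> M i \<rightarrow>\<^sub>M N i"
  shows "distr (PiM I M) (PiM I N) (\<lambda>x. \<lambda>i\<in>I. f i (x i)) = PiM I (\<lambda>i. distr (M i) (N i) (f i))"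
proof -
  interpret D: product_prob_space "\<lambda>i. distr (M i) (N i) (f i)"
    by (intro product_prob_spaceI prob_space.prob_space_distr M f)
  interpret P: product_prob_space M
    by (intro product_prob_spaceI M)
  show ?thesis
  proof (rule D.PiM_eqI[OF I])
    show "sets (distr (PiM I M) (PiM I N) (\<lambda>x. \<lambda>i\<in>I. f i (x i))) = sets (PiM I (\<lambda>i. distr (M i) (N i) (f i)))"
      by (simp cong: sets_PiM_cong)
  next
    fix A assume "\<And>i. i \<in> I \<Longrightarrow> A i \<in> sets (distr (M i) (N i) (f i))"
    then have A[measurable]: "\<And>i. i \<in> I \<Longrightarrow> A i \<in> sets (N i)" by simp
    have "(\<lambda>x. \<lambda>i\<in>I. f i (x i)) -` PiE I A \<inter> space (PiM I M) = PiE I (\<lambda>i. f i -` A i \<inter> space (M i))"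
      by (auto simp: space_PiM PiE_iff)
    then show "emeasure (distr (PiM I M) (PiM I N) (\<lambda>x. \<lambda>i\<in>I. f i (x i))) (PiE I A)
        = (\<Prod>i\<in>I. emeasure (distr (M i) (N i) (f i)) (A i))"
      using I by (simp add: emeasure_distr sets_PiM_I_finite P.emeasure_PiM)
  qed
qed

lemma (in sigma_finite_measure) nn_integral_PiM_prod_le:
  fixes f g :: "'i \<Rightarrow> 'a \<Rightarrow> ennreal"
  assumes I: "finite I"
    and [measurable]: "\<And>i. f i \<in> borel_measurable M" "\<And>i. g i \<in> borel_measurable M"
    and le: "\<And>i. i \<in> I \<Longrightarrow> (\<integral>\<^sup>+t. f i t \<partial>M) \<le> c * (\<integral>\<^sup>+t. g i t \<partial>M)"
  shows "(\<integral>\<^sup>+x. (\<Prod>i\<in>I. f i (x i)) \<partial>PiM I (\<lambda>_. M)) \<le> c ^ card I * (\<integral>\<^sup>+x. (\<Prod>i\<in>I. g i (x i)) \<partial>PiM I (\<lambda>_. M))"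
proof -
  interpret product_sigma_finite "\<lambda>_. M"
    by (simp add: product_sigma_finite_def sigma_finite_measure_axioms)
  have "(\<integral>\<^sup>+x. (\<Prod>i\<in>I. f i (x i)) \<partial>PiM I (\<lambda>_. M)) = (\<Prod>i\<in>I. \<integral>\<^sup>+t. f i t \<partial>M)"
    using I by (simp add: product_nn_integral_prod)
  also have "\<dots> \<le> (\<Prod>i\<in>I. c * \<integral>\<^sup>+t. g i t \<partial>M)"
    using le by (rule prod_mono_ennreal)
  also have "\<dots> = c ^ card I * (\<integral>\<^sup>+x. (\<Prod>i\<in>I. g i (x i)) \<partial>PiM I (\<lambda>_. M))"
    using I by (simp add: product_nn_integral_prod prod.distrib)
  finally show ?thesis .
qed

lemma prob_space_density_imp_nn_integral_eq_1:
  assumes "prob_space (density M f)" and "f \<in> borel_measurable M"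
  shows "(\<integral>\<^sup>+x. f x \<partial>M) = 1"
proof -
  have "1 = emeasure (density M f) (space M)"
    using prob_space.emeasure_space_1[OF assms(1)] by simp
  also have "\<dots> = (\<integral>\<^sup>+x. f x * indicator (space M) x \<partial>M)"
    using assms(2) by (rule emeasure_density) simp
  also have "\<dots> = (\<integral>\<^sup>+x. f x \<partial>M)"
    by (intro nn_integral_cong) simp
  finally show ?thesis by simp
qed

lemma (in pair_sigma_finite) nn_integral_density_Fubini:
  assumes [measurable]: "f \<in> borel_measurable M1" "case_prod F \<in> borel_measurable (M1 \<Otimes>\<^sub>M M2)"
  shows "(\<integral>\<^sup>+x. (\<integral>\<^sup>+y. F x y \<partial>M2) \<partial>density M1 f) = (\<integral>\<^sup>+y. (\<integral>\<^sup>+x. f x * F x y \<partial>M1) \<partial>M2)"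
proof -
  have "(\<integral>\<^sup>+x. (\<integral>\<^sup>+y. F x y \<partial>M2) \<partial>density M1 f) = (\<integral>\<^sup>+x. f x * (\<integral>\<^sup>+y. F x y \<partial>M2) \<partial>M1)"
    by (intro nn_integral_density M2.borel_measurable_nn_integral) simp_all
  also have "\<dots> = (\<integral>\<^sup>+x. (\<integral>\<^sup>+y. f x * F x y \<partial>M2) \<partial>M1)"
  proof (intro nn_integral_cong)
    fix x assume "x \<in> space M1"
    then have "F x \<in> borel_measurable M2"
      using measurable_Pair2[OF assms(2)] by simp
    then show "f x * (\<integral>\<^sup>+y. F x y \<partial>M2) = (\<integral>\<^sup>+y. f x * F x y \<partial>M2)"
      by (rule nn_integral_cmult[symmetric])
  qed
  also have "\<dots> = (\<integral>\<^sup>+y. (\<integral>\<^sup>+x. f x * F x y \<partial>M1) \<partial>M2)"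
    by (rule Fubini'[symmetric]) simp
  finally show ?thesis .
qed

section \<open>Gaussian integrals\<close>

lemma borel_measurable_normal_density_param[measurable (raw)]:
  assumes [measurable]: "f \<in> borel_measurable M" "g \<in> borel_measurable M"
  shows "(\<lambda>x. normal_density (f x) \<sigma> (g x)) \<in> borel_measurable M"
  unfolding normal_density_def by measurable

lemma distr_normal_density_plus:
  assumes "0 < \<sigma>"
  shows "distr (density lborel (normal_density \<mu> \<sigma>)) lborel ((+) c) = density lborel (normal_density (c + \<mu>) \<sigma>)"
proof -
  interpret prob_space "density lborel (normal_density \<mu> \<sigma>)"
    using assms by (rule prob_space_normal_density)
  have "distributed (density lborel (normal_density \<mu> \<sigma>)) lborel (\<lambda>x. x) (normal_density \<mu> \<sigma>)"
    unfolding distributed_def by (simp add: distr_id2 cong: distr_cong)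
  from normal_density_affine[OF this assms, of 1 c] show ?thesis
    by (simp add: distributed_def)
qed

lemma nn_integral_exp_quadratic:
  fixes a b :: real
  assumes a: "0 < a"
  shows "(\<integral>\<^sup>+t. exp (- a * t\<^sup>2 + b * t) \<partial>lborel) = ennreal (sqrt (pi / a) * exp (b\<^sup>2 / (4 * a)))"
proof -
  define C where "C = sqrt (pi / a) * exp (b\<^sup>2 / (4 * a))"
  define \<mu> \<sigma> where "\<mu> = b / (2 * a)" and "\<sigma> = 1 / sqrt (2 * a)"
  have \<sigma>: "0 < \<sigma>" "\<sigma>\<^sup>2 = 1 / (2 * a)"
    using a by (simp_all add: \<sigma>_def power_divide)
  have "exp (- a * t\<^sup>2 + b * t) = C * normal_density \<mu> \<sigma> t" for t
  proof -
    have "C * normal_density \<mu> \<sigma> t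
        = (sqrt (pi / a) * (1 / sqrt (2 * pi * \<sigma>\<^sup>2))) * (exp (b\<^sup>2 / (4 * a)) * exp (- (t - \<mu>)\<^sup>2 / (2 * \<sigma>\<^sup>2)))"
      unfolding C_def normal_density_def by (simp only: mult_ac)
    also have "sqrt (pi / a) * (1 / sqrt (2 * pi * \<sigma>\<^sup>2)) = 1"
      using a unfolding \<sigma>(2) by (simp add: real_sqrt_divide)
    also have "b\<^sup>2 / (4 * a) + (- (t - \<mu>)\<^sup>2 / (2 * \<sigma>\<^sup>2)) = - a * t\<^sup>2 + b * t"
      using a unfolding \<sigma>(2) \<mu>_def by (simp add: field_simps power2_eq_square)
    ultimately show ?thesis
      by (simp add: exp_add[symmetric])
  qed
  moreover have "0 \<le> C"
    using a by (simp add: C_def)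
  ultimately have "(\<integral>\<^sup>+t. exp (- a * t\<^sup>2 + b * t) \<partial>lborel) = (\<integral>\<^sup>+t. C * ennreal (normal_density \<mu> \<sigma> t) \<partial>lborel)"
    by (intro nn_integral_cong) (simp add: ennreal_mult)
  also have "\<dots> = C"
    using \<sigma>(1) by (simp add: nn_integral_cmult nn_integral_eq_integral)
  finally show ?thesis unfolding C_def .
qed

lemma completed_square_exponent_le:
  fixes a l S b :: real
  assumes a: "0 < a" and l: "0 < l"
  shows "- l * b\<^sup>2 + (S + 2 * l * b)\<^sup>2 / (4 * (a + l)) \<le> S\<^sup>2 / (4 * a)"
proof -
  have "(a + l) * (S\<^sup>2 + 4 * a * l * b\<^sup>2) - a * (S + 2 * l * b)\<^sup>2 = l * (S - 2 * a * b)\<^sup>2"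
    by (simp add: power2_eq_square algebra_simps)
  then have "a * (S + 2 * l * b)\<^sup>2 \<le> (a + l) * (S\<^sup>2 + 4 * a * l * b\<^sup>2)"
    using l by (smt (verit) mult_nonneg_nonneg zero_le_power2)
  with a l show ?thesis
    by (simp add: field_simps)
qed

lemma nn_integral_exp_quadratic_damped_le:
  fixes a l S b :: real
  assumes a: "0 < a" and l: "0 < l"
  shows "(\<integral>\<^sup>+t. exp (- a * t\<^sup>2 + S * t) * exp (- l * (t - b)\<^sup>2) \<partial>lborel)
    \<le> sqrt (a / (a + l)) * (\<integral>\<^sup>+t. exp (- a * t\<^sup>2 + S * t) \<partial>lborel)"
proof -
  have "exp (- a * t\<^sup>2 + S * t) * exp (- l * (t - b)\<^sup>2)
      = exp (- l * b\<^sup>2) * exp (- (a + l) * t\<^sup>2 + (S + 2 * l * b) * t)" for t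
    by (simp add: exp_add[symmetric] power2_eq_square algebra_simps)
  then have "(\<integral>\<^sup>+t. exp (- a * t\<^sup>2 + S * t) * exp (- l * (t - b)\<^sup>2) \<partial>lborel)
      = exp (- l * b\<^sup>2) * (\<integral>\<^sup>+t. exp (- (a + l) * t\<^sup>2 + (S + 2 * l * b) * t) \<partial>lborel)"
    by (simp add: ennreal_mult nn_integral_cmult)
  also have "\<dots> = ennreal (exp (- l * b\<^sup>2) * (sqrt (pi / (a + l)) * exp ((S + 2 * l * b)\<^sup>2 / (4 * (a + l)))))"
    using a l by (subst nn_integral_exp_quadratic) (auto simp: ennreal_mult)
  also have "\<dots> \<le> ennreal (sqrt (a / (a + l)) * (sqrt (pi / a) * exp (S\<^sup>2 / (4 * a))))"
  proof (intro ennreal_leI)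
    have "exp (- l * b\<^sup>2) * exp ((S + 2 * l * b)\<^sup>2 / (4 * (a + l))) \<le> exp (S\<^sup>2 / (4 * a))"
      using completed_square_exponent_le[OF a l, of b S] by (simp add: exp_add[symmetric])
    then have "sqrt (pi / (a + l)) * (exp (- l * b\<^sup>2) * exp ((S + 2 * l * b)\<^sup>2 / (4 * (a + l))))
        \<le> sqrt (pi / (a + l)) * exp (S\<^sup>2 / (4 * a))"
      using a l by (intro mult_left_mono) simp_all
    moreover have "sqrt (pi / (a + l)) = sqrt (a / (a + l)) * sqrt (pi / a)"
      using a l by (simp add: real_sqrt_mult[symmetric])
    ultimately show "exp (- l * b\<^sup>2) * (sqrt (pi / (a + l)) * exp ((S + 2 * l * b)\<^sup>2 / (4 * (a + l))))
        \<le> sqrt (a / (a + l)) * (sqrt (pi / a) * exp (S\<^sup>2 / (4 * a)))"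
      by (simp only: mult_ac)
  qed
  also have "\<dots> = sqrt (a / (a + l)) * (\<integral>\<^sup>+t. exp (- a * t\<^sup>2 + S * t) \<partial>lborel)"
    using a l by (subst nn_integral_exp_quadratic) (auto simp: ennreal_mult)
  finally show ?thesis .
qed

section \<open>The Gaussian location model\<close>

lemma measurable_Rp_component[measurable]: "i \<in> {..<p} \<Longrightarrow> (\<lambda>x. x i) \<in> borel_measurable (Rp p)"
  unfolding Rp_def by simp

lemma space_Rp: "space (Rp p) = PiE {..<p} (\<lambda>_. UNIV)"
  by (simp add: Rp_def space_PiM)

lemma sigma_finite_Rp: "sigma_finite_measure (Rp p)"
proof -
  interpret product_sigma_finite "\<lambda>_. lborel :: real measure"
    by (simp add: product_sigma_finite_def lborel.sigma_finite_measure_axioms)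
  show ?thesis
    unfolding Rp_def by (rule sigma_finite) simp
qed

lemma sigma_finite_PiM_Rp: "sigma_finite_measure (PiM I (\<lambda>_. Rp p))" if "finite I"
proof -
  interpret product_sigma_finite "\<lambda>_. Rp p"
    by (simp add: product_sigma_finite_def sigma_finite_Rp)
  show ?thesis
    using that by (rule sigma_finite)
qed

lemma PiM_normal_density:
  assumes "0 < \<sigma>"
  shows "PiM {..<p} (\<lambda>i. density lborel (normal_density (m i) \<sigma>))
    = density (Rp p) (\<lambda>x. \<Prod>i<p. normal_density (m i) \<sigma> (x i))"
proof -
  have "PiM {..<p} (\<lambda>i. density lborel (normal_density (m i) \<sigma>))
      = density (Rp p) (\<lambda>x. \<Prod>i<p. ennreal (normal_density (m i) \<sigma> (x i)))"
    unfolding Rp_def using assms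
    by (intro PiM_density) (auto intro: prob_space_imp_sigma_finite prob_space_normal_density
        lborel.sigma_finite_measure_axioms)
  then show ?thesis
    by (simp add: prod_ennreal)
qed

lemma gauss_eq_density: "gauss p \<theta> = density (Rp p) (\<lambda>x. \<Prod>i<p. normal_density (\<theta> i) 1 (x i))"
  unfolding gauss_def by (simp add: PiM_normal_density)

lemma prob_space_gauss: "prob_space (gauss p \<theta>)"
  unfolding gauss_def by (simp add: prob_space_PiM prob_space_normal_density)

lemma sets_gauss: "sets (gauss p \<theta>) = sets (Rp p)"
  by (simp add: gauss_eq_density)

lemma gauss_translate:
  "distr (gauss p \<theta>) (Rp p) (\<lambda>x. \<lambda>i\<in>{..<p}. c i + x i) = gauss p (\<lambda>i. c i + \<theta> i)"
  unfolding gauss_def Rp_def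
  by (subst distr_PiM_componentwise)
    (simp_all add: prob_space_normal_density distr_normal_density_plus)

lemma euclid_dist_self [simp]: "euclid_dist p x x = 0"
  by (simp add: euclid_dist_def)

lemma euclid_dist_commute: "euclid_dist p x y = euclid_dist p y x"
  by (simp add: euclid_dist_def power2_commute)

lemma euclid_dist_triangle: "euclid_dist p x z \<le> euclid_dist p x y + euclid_dist p y z"
  using L2_set_triangle_ineq[of "\<lambda>i. x i - y i" "\<lambda>i. y i - z i" "{..<p}"]
  by (simp add: euclid_dist_def L2_set_def)

lemma euclid_dist_power2: "(euclid_dist p x y)\<^sup>2 = (\<Sum>i<p. (x i - y i)\<^sup>2)"
  by (simp add: euclid_dist_def sum_nonneg)

lemma wasserstein1_distr_le:
  assumes "prob_space P" and sets_P: "sets P = sets (Rp p)"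
    and T[measurable]: "T \<in> Rp p \<rightarrow>\<^sub>M Rp p"
    and d: "\<And>x. x \<in> space P \<Longrightarrow> euclid_dist p x (T x) \<le> d"
  shows "wasserstein1 p P (distr P (Rp p) T) \<le> d"
proof -
  interpret prob_space P by fact
  note measurable_cong_sets[OF sets_P refl, measurable_cong]
  define Q where "Q = distr P (Rp p \<Otimes>\<^sub>M Rp p) (\<lambda>x. (x, T x))"
  have "distr Q (Rp p) fst = P"
    by (simp add: Q_def distr_distr comp_def distr_id2 sets_P)
  moreover have "distr Q (Rp p) snd = distr P (Rp p) T"
    by (simp add: Q_def distr_distr comp_def)
  ultimately have "Q \<in> couplings p P (distr P (Rp p) T)"
    by (auto simp: couplings_def Q_def prob_space_distr)
  then have "wasserstein1 p P (distr P (Rp p) T) \<le> (\<integral>\<^sup>+z. euclid_dist p (fst z) (snd z) \<partial>Q)"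
    unfolding wasserstein1_def by (rule INF_lower)
  also have "\<dots> = (\<integral>\<^sup>+x. euclid_dist p x (T x) \<partial>P)"
    unfolding Q_def by (subst nn_integral_distr) (auto simp: euclid_dist_def)
  also have "\<dots> \<le> (\<integral>\<^sup>+x. d \<partial>P)"
    using d by (intro nn_integral_mono ennreal_leI)
  also have "\<dots> = d"
    by (simp add: emeasure_space_1)
  finally show ?thesis .
qed

lemma wasserstein1_gauss_le: "wasserstein1 p (gauss p \<theta>) (gauss p \<theta>') \<le> euclid_dist p \<theta> \<theta>'"
proof -
  define c where "c i = \<theta>' i - \<theta> i" for i
  have "gauss p \<theta>' = distr (gauss p \<theta>) (Rp p) (\<lambda>x. \<lambda>i\<in>{..<p}. c i + x i)"
    by (simp add: gauss_translate c_def)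
  also have "wasserstein1 p (gauss p \<theta>) \<dots> \<le> euclid_dist p \<theta> \<theta>'"
    by (rule wasserstein1_distr_le)
      (auto simp: prob_space_gauss sets_gauss Rp_def euclid_dist_def c_def power2_commute)
  finally show ?thesis .
qed

lemma gauss_in_robust_model: "0 \<le> \<epsilon> \<Longrightarrow> gauss p \<theta> \<in> robust_model p \<theta> \<epsilon>"
  using wasserstein1_gauss_le[of p \<theta> \<theta>]
  by (auto simp: robust_model_def prob_space_gauss sets_gauss intro: order_trans)

lemma prob_space_sample: "prob_space P \<Longrightarrow> prob_space (sample n P)"
  unfolding sample_def by (rule prob_space_PiM)

lemma sets_sample: "sets P = sets (Rp p) \<Longrightarrow> sets (sample n P) = sets (PiM {..<n} (\<lambda>_. Rp p))"
  unfolding sample_def by (rule sets_PiM_cong) simp_all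

lemma space_sample: "sets P = sets (Rp p) \<Longrightarrow> space (sample n P) = space (PiM {..<n} (\<lambda>_. Rp p))"
  by (rule sets_eq_imp_space_eq) (rule sets_sample)

definition likelihood :: "nat \<Rightarrow> nat \<Rightarrow> (nat \<Rightarrow> real) \<Rightarrow> (nat \<Rightarrow> nat \<Rightarrow> real) \<Rightarrow> real" where
  "likelihood p n \<theta> X = (\<Prod>j<n. \<Prod>i<p. normal_density (\<theta> i) 1 (X j i))"

lemma likelihood_nonneg: "0 \<le> likelihood p n \<theta> X"
  by (simp add: likelihood_def prod_nonneg)

lemma borel_measurable_likelihood[measurable]:
  "likelihood p n \<theta> \<in> borel_measurable (PiM {..<n} (\<lambda>_. Rp p))"
  unfolding likelihood_def by measurable

lemma sample_gauss_eq_density: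
  "sample n (gauss p \<theta>) = density (PiM {..<n} (\<lambda>_. Rp p)) (likelihood p n \<theta>)"
proof -
  have "sample n (gauss p \<theta>)
      = density (PiM {..<n} (\<lambda>_. Rp p)) (\<lambda>X. \<Prod>j<n. ennreal (\<Prod>i<p. normal_density (\<theta> i) 1 (X j i)))"
    unfolding sample_def gauss_eq_density
    by (intro PiM_density)
      (auto simp: sigma_finite_Rp prob_space_gauss[unfolded gauss_eq_density] prob_space_imp_sigma_finite)
  then show ?thesis
    by (simp add: likelihood_def prod_ennreal prod_nonneg)
qed

lemma nn_integral_likelihood: "(\<integral>\<^sup>+X. likelihood p n \<theta> X \<partial>PiM {..<n} (\<lambda>_. Rp p)) = 1"
  using prob_space_sample[OF prob_space_gauss, of n p \<theta>]
  by (intro prob_space_density_imp_nn_integral_eq_1) (simp_all add: sample_gauss_eq_density likelihood_def)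

lemma emeasure_sample_gauss_near_le:
  assumes [measurable]: "a \<in> PiM {..<n} (\<lambda>_. Rp p) \<rightarrow>\<^sub>M Rp p" and \<kappa>: "0 \<le> \<kappa>"
  shows "emeasure (sample n (gauss p \<theta>)) {X \<in> space (PiM {..<n} (\<lambda>_. Rp p)). euclid_dist p \<theta> (a X) < r}
    \<le> (\<integral>\<^sup>+X. exp (\<kappa> * r\<^sup>2) * (likelihood p n \<theta> X * exp (- \<kappa> * (\<Sum>i<p. (\<theta> i - a X i)\<^sup>2)))
          \<partial>PiM {..<n} (\<lambda>_. Rp p))"
proof -
  let ?E = "{X \<in> space (PiM {..<n} (\<lambda>_. Rp p)). euclid_dist p \<theta> (a X) < r}"
  have E: "?E \<in> sets (PiM {..<n} (\<lambda>_. Rp p))"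
    unfolding euclid_dist_def by measurable
  have "emeasure (sample n (gauss p \<theta>)) ?E
      = (\<integral>\<^sup>+X. ennreal (likelihood p n \<theta> X) * indicator ?E X \<partial>PiM {..<n} (\<lambda>_. Rp p))"
    unfolding sample_gauss_eq_density likelihood_def by (rule emeasure_density[OF _ E]) measurable
  also have "\<dots> \<le> (\<integral>\<^sup>+X. exp (\<kappa> * r\<^sup>2) * (likelihood p n \<theta> X * exp (- \<kappa> * (\<Sum>i<p. (\<theta> i - a X i)\<^sup>2)))
          \<partial>PiM {..<n} (\<lambda>_. Rp p))"
  proof (intro nn_integral_mono)
    fix X
    show "ennreal (likelihood p n \<theta> X) * indicator ?E X
        \<le> ennreal (exp (\<kappa> * r\<^sup>2) * (likelihood p n \<theta> X * exp (- \<kappa> * (\<Sum>i<p. (\<theta> i - a X i)\<^sup>2))))"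
    proof (cases "X \<in> ?E")
      case True
      then have "(euclid_dist p \<theta> (a X))\<^sup>2 < r\<^sup>2"
        by (intro power_strict_mono) (simp_all add: euclid_dist_def sum_nonneg)
      then have "(\<Sum>i<p. (\<theta> i - a X i)\<^sup>2) < r\<^sup>2"
        by (simp only: euclid_dist_power2)
      then have tilt: "1 \<le> exp (\<kappa> * r\<^sup>2) * exp (- \<kappa> * (\<Sum>i<p. (\<theta> i - a X i)\<^sup>2))"
        using \<kappa> by (simp add: exp_add[symmetric] mult_left_mono)
      have "likelihood p n \<theta> X
          \<le> exp (\<kappa> * r\<^sup>2) * (likelihood p n \<theta> X * exp (- \<kappa> * (\<Sum>i<p. (\<theta> i - a X i)\<^sup>2)))"
        using mult_right_mono[OF tilt likelihood_nonneg[of p n \<theta> X]] by (simp add: mult_ac)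
      with True show ?thesis
        by (simp add: ennreal_leI)
    qed simp
  qed
  finally show ?thesis .
qed

section \<open>Bayes risk under a Gaussian prior\<close>

definition prior_density :: "nat \<Rightarrow> nat \<Rightarrow> (nat \<Rightarrow> real) \<Rightarrow> real" where
  "prior_density p n \<theta> = (\<Prod>i<p. normal_density 0 (1 / sqrt n) (\<theta> i))"

lemma prior_density_nonneg: "0 \<le> prior_density p n \<theta>"
  by (simp add: prior_density_def prod_nonneg)

lemma prob_space_prior: "0 < n \<Longrightarrow> prob_space (density (Rp p) (prior_density p n))"
  unfolding prior_density_def
  by (subst PiM_normal_density[symmetric]) (auto intro!: prob_space_PiM prob_space_normal_density)

lemma nn_integral_prior_density: "0 < n \<Longrightarrow> (\<integral>\<^sup>+\<theta>. prior_density p n \<theta> \<partial>Rp p) = 1"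
  by (intro prob_space_density_imp_nn_integral_eq_1 prob_space_prior) (simp_all add: prior_density_def)

lemma nn_integral_marginal_likelihood:
  assumes n: "0 < n"
  shows "(\<integral>\<^sup>+X. (\<integral>\<^sup>+\<theta>. prior_density p n \<theta> * likelihood p n \<theta> X \<partial>Rp p) \<partial>PiM {..<n} (\<lambda>_. Rp p)) = 1"
proof -
  interpret pair_sigma_finite "Rp p" "PiM {..<n} (\<lambda>_. Rp p)"
    by (simp add: pair_sigma_finite_def sigma_finite_Rp sigma_finite_PiM_Rp)
  have "(\<integral>\<^sup>+X. (\<integral>\<^sup>+\<theta>. prior_density p n \<theta> * likelihood p n \<theta> X \<partial>Rp p) \<partial>PiM {..<n} (\<lambda>_. Rp p))
      = (\<integral>\<^sup>+\<theta>. (\<integral>\<^sup>+X. prior_density p n \<theta> * likelihood p n \<theta> X \<partial>PiM {..<n} (\<lambda>_. Rp p)) \<partial>Rp p)"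
    by (rule Fubini') (unfold prior_density_def likelihood_def, measurable)
  also have "\<dots> = (\<integral>\<^sup>+\<theta>. prior_density p n \<theta> \<partial>Rp p)"
    by (intro nn_integral_cong)
      (simp add: ennreal_mult prior_density_nonneg likelihood_nonneg nn_integral_cmult
        nn_integral_likelihood)
  also have "\<dots> = 1"
    using n by (rule nn_integral_prior_density)
  finally show ?thesis .
qed

definition posterior_kernel :: "nat \<Rightarrow> (nat \<Rightarrow> real) \<Rightarrow> real \<Rightarrow> real" where
  "posterior_kernel n y t = normal_density 0 (1 / sqrt n) t * (\<Prod>j<n. normal_density t 1 (y j))"

lemma posterior_kernel_nonneg: "0 \<le> posterior_kernel n y t"
  by (simp add: posterior_kernel_def prod_nonneg)

lemma prior_density_mult_likelihood:
  "prior_density p n \<theta> * likelihood p n \<theta> X = (\<Prod>i<p. posterior_kernel n (\<lambda>j. X j i) (\<theta> i))"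
  unfolding prior_density_def likelihood_def posterior_kernel_def
  by (subst prod.swap) (simp add: prod.distrib)

lemma posterior_kernel_eq_exp_quadratic:
  assumes "0 < n"
  shows "posterior_kernel n y t = posterior_kernel n y 0 * exp (- real n * t\<^sup>2 + (\<Sum>j<n. y j) * t)"
proof -
  have "normal_density t 1 (y j) = normal_density 0 1 (y j) * exp (y j * t - t\<^sup>2 / 2)" for j
    by (simp add: normal_density_def mult.assoc exp_add[symmetric] power2_eq_square field_simps)
  moreover have "normal_density 0 (1 / sqrt n) t = normal_density 0 (1 / sqrt n) 0 * exp (- (n / 2) * t\<^sup>2)"
    using assms by (simp add: normal_density_def power_divide)
  ultimately have "posterior_kernel n y t = posterior_kernel n y 0
      * (exp (- (n / 2) * t\<^sup>2) * exp (\<Sum>j<n. y j * t - t\<^sup>2 / 2))"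
    by (simp add: posterior_kernel_def prod.distrib exp_sum mult_ac)
  also have "exp (- (n / 2) * t\<^sup>2) * exp (\<Sum>j<n. y j * t - t\<^sup>2 / 2) = exp (- real n * t\<^sup>2 + (\<Sum>j<n. y j) * t)"
    by (simp add: exp_add[symmetric] sum_subtractf sum_distrib_left algebra_simps)
  finally show ?thesis .
qed

lemma nn_integral_posterior_kernel_damped_le:
  assumes n: "0 < n"
  shows "(\<integral>\<^sup>+t. posterior_kernel n y t * exp (- (3 * real n) * (t - b)\<^sup>2) \<partial>lborel)
    \<le> ennreal (1 / 2) * (\<integral>\<^sup>+t. posterior_kernel n y t \<partial>lborel)"
proof -
  define K S where "K = posterior_kernel n y 0" and "S = (\<Sum>j<n. y j)"
  have K: "0 \<le> K"
    by (simp add: K_def posterior_kernel_nonneg)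
  have kernel: "posterior_kernel n y t = K * exp (- real n * t\<^sup>2 + S * t)" for t
    unfolding K_def S_def using n by (rule posterior_kernel_eq_exp_quadratic)
  have "(\<integral>\<^sup>+t. posterior_kernel n y t * exp (- (3 * real n) * (t - b)\<^sup>2) \<partial>lborel)
      = K * (\<integral>\<^sup>+t. exp (- real n * t\<^sup>2 + S * t) * exp (- (3 * real n) * (t - b)\<^sup>2) \<partial>lborel)"
    using K by (simp add: kernel ennreal_mult nn_integral_cmult[symmetric] mult.assoc)
  also have "\<dots> \<le> K * (sqrt (real n / (real n + 3 * real n)) * (\<integral>\<^sup>+t. exp (- real n * t\<^sup>2 + S * t) \<partial>lborel))"
    using n by (intro mult_left_mono nn_integral_exp_quadratic_damped_le) simp_all
  also have "sqrt (real n / (real n + 3 * real n)) = 1 / 2"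
    using n by (simp add: real_sqrt_divide)
  also have "K * (ennreal (1 / 2) * (\<integral>\<^sup>+t. exp (- real n * t\<^sup>2 + S * t) \<partial>lborel))
      = ennreal (1 / 2) * (\<integral>\<^sup>+t. posterior_kernel n y t \<partial>lborel)"
    using K by (simp add: kernel ennreal_mult nn_integral_cmult mult.left_commute)
  finally show ?thesis .
qed

lemma nn_integral_posterior_damped_le:
  assumes n: "0 < n"
  shows "(\<integral>\<^sup>+\<theta>. prior_density p n \<theta> * likelihood p n \<theta> X * exp (- (3 * real n) * (\<Sum>i<p. (\<theta> i - b i)\<^sup>2)) \<partial>Rp p)
    \<le> ennreal ((1 / 2) ^ p) * (\<integral>\<^sup>+\<theta>. prior_density p n \<theta> * likelihood p n \<theta> X \<partial>Rp p)"
proof -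
  define f where "f i t = ennreal (posterior_kernel n (\<lambda>j. X j i) t * exp (- (3 * real n) * (t - b i)\<^sup>2))" for i t
  define g where "g i t = ennreal (posterior_kernel n (\<lambda>j. X j i) t)" for i t
  have meas: "f i \<in> borel_measurable borel" "g i \<in> borel_measurable borel" for i
    unfolding f_def g_def posterior_kernel_def by measurable
  have "(\<integral>\<^sup>+\<theta>. prior_density p n \<theta> * likelihood p n \<theta> X * exp (- (3 * real n) * (\<Sum>i<p. (\<theta> i - b i)\<^sup>2)) \<partial>Rp p)
      = (\<integral>\<^sup>+\<theta>. (\<Prod>i<p. f i (\<theta> i)) \<partial>Rp p)"
    by (intro nn_integral_cong)
      (simp add: f_def prior_density_mult_likelihood sum_distrib_left exp_sum prod.distrib
        prod_ennreal posterior_kernel_nonneg)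
  also have "\<dots> \<le> ennreal (1 / 2) ^ card {..<p} * (\<integral>\<^sup>+\<theta>. (\<Prod>i<p. g i (\<theta> i)) \<partial>Rp p)"
    unfolding Rp_def
  proof (rule lborel.nn_integral_PiM_prod_le)
    show "(\<integral>\<^sup>+t. f i t \<partial>lborel) \<le> ennreal (1 / 2) * (\<integral>\<^sup>+t. g i t \<partial>lborel)" for i
      unfolding f_def g_def by (rule nn_integral_posterior_kernel_damped_le[OF n])
  qed (simp_all add: meas)
  also have "ennreal (1 / 2) ^ card {..<p} = ennreal ((1 / 2) ^ p)"
    by (subst ennreal_power) simp_all
  also have "(\<integral>\<^sup>+\<theta>. (\<Prod>i<p. g i (\<theta> i)) \<partial>Rp p) = (\<integral>\<^sup>+\<theta>. prior_density p n \<theta> * likelihood p n \<theta> X \<partial>Rp p)"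
    by (simp add: g_def prior_density_mult_likelihood prod_ennreal posterior_kernel_nonneg)
  finally show ?thesis .
qed

lemma nn_integral_joint_damped_le:
  assumes n: "0 < n" and [measurable]: "b \<in> PiM {..<n} (\<lambda>_. Rp p) \<rightarrow>\<^sub>M Rp p"
  shows "(\<integral>\<^sup>+X. (\<integral>\<^sup>+\<theta>. prior_density p n \<theta> * likelihood p n \<theta> X
      * exp (- (3 * real n) * (\<Sum>i<p. (\<theta> i - b X i)\<^sup>2)) \<partial>Rp p) \<partial>PiM {..<n} (\<lambda>_. Rp p))
    \<le> ennreal ((1 / 2) ^ p)"
proof -
  interpret Rp: sigma_finite_measure "Rp p"
    by (rule sigma_finite_Rp)
  have "(\<lambda>X. \<integral>\<^sup>+\<theta>. prior_density p n \<theta> * likelihood p n \<theta> X \<partial>Rp p) \<in> borel_measurable (PiM {..<n} (\<lambda>_. Rp p))"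
    by (rule Rp.borel_measurable_nn_integral) (unfold prior_density_def likelihood_def, measurable)
  then have "(\<integral>\<^sup>+X. ennreal ((1 / 2) ^ p) * (\<integral>\<^sup>+\<theta>. prior_density p n \<theta> * likelihood p n \<theta> X \<partial>Rp p)
      \<partial>PiM {..<n} (\<lambda>_. Rp p)) = ennreal ((1 / 2) ^ p)"
    by (simp add: nn_integral_cmult nn_integral_marginal_likelihood[OF n])
  moreover have "(\<integral>\<^sup>+X. (\<integral>\<^sup>+\<theta>. prior_density p n \<theta> * likelihood p n \<theta> X
      * exp (- (3 * real n) * (\<Sum>i<p. (\<theta> i - b X i)\<^sup>2)) \<partial>Rp p) \<partial>PiM {..<n} (\<lambda>_. Rp p))
    \<le> (\<integral>\<^sup>+X. ennreal ((1 / 2) ^ p) * (\<integral>\<^sup>+\<theta>. prior_density p n \<theta> * likelihood p n \<theta> X \<partial>Rp p)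
      \<partial>PiM {..<n} (\<lambda>_. Rp p))"
    by (intro nn_integral_mono nn_integral_posterior_damped_le[OF n])
  ultimately show ?thesis
    by simp
qed

lemma bayes_prob_near_le:
  assumes n: "0 < n" and a[measurable]: "a \<in> PiM {..<n} (\<lambda>_. Rp p) \<rightarrow>\<^sub>M Rp p"
  shows "(\<integral>\<^sup>+\<theta>. emeasure (sample n (gauss p \<theta>)) {X \<in> space (PiM {..<n} (\<lambda>_. Rp p)). euclid_dist p \<theta> (a X) < r}
      \<partial>density (Rp p) (prior_density p n))
    \<le> ennreal (exp (3 * real n * r\<^sup>2) * (1 / 2) ^ p)"
proof -
  define L where "L = PiM {..<n} (\<lambda>_. Rp p)"
  define C where "C = exp (3 * real n * r\<^sup>2)"
  define D where "D \<theta> X = likelihood p n \<theta> X * exp (- (3 * real n) * (\<Sum>i<p. (\<theta> i - a X i)\<^sup>2))" for \<theta> X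
  interpret pair_sigma_finite "Rp p" L
    by (simp add: pair_sigma_finite_def L_def sigma_finite_Rp sigma_finite_PiM_Rp)
  have C: "0 \<le> C"
    by (simp add: C_def)
  have "(\<integral>\<^sup>+\<theta>. emeasure (sample n (gauss p \<theta>)) {X \<in> space L. euclid_dist p \<theta> (a X) < r}
      \<partial>density (Rp p) (prior_density p n))
    \<le> (\<integral>\<^sup>+\<theta>. (\<integral>\<^sup>+X. C * D \<theta> X \<partial>L) \<partial>density (Rp p) (prior_density p n))"
    unfolding L_def C_def D_def by (intro nn_integral_mono emeasure_sample_gauss_near_le a) simp
  also have "\<dots> = (\<integral>\<^sup>+X. (\<integral>\<^sup>+\<theta>. prior_density p n \<theta> * (C * D \<theta> X) \<partial>Rp p) \<partial>L)"
  proof -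
    have "(\<lambda>\<theta>. ennreal (prior_density p n \<theta>)) \<in> borel_measurable (Rp p)"
      "(\<lambda>(\<theta>, X). ennreal (C * D \<theta> X)) \<in> borel_measurable (Rp p \<Otimes>\<^sub>M L)"
      unfolding D_def L_def prior_density_def likelihood_def by measurable
    then show ?thesis
      by (simp add: nn_integral_density_Fubini ennreal_mult' prior_density_nonneg)
  qed
  also have "\<dots> = C * (\<integral>\<^sup>+X. (\<integral>\<^sup>+\<theta>. prior_density p n \<theta> * D \<theta> X \<partial>Rp p) \<partial>L)"
  proof -
    have "(\<lambda>X. \<integral>\<^sup>+\<theta>. prior_density p n \<theta> * D \<theta> X \<partial>Rp p) \<in> borel_measurable L"
      by (rule M1.borel_measurable_nn_integral) (unfold D_def L_def prior_density_def likelihood_def, measurable)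
    moreover have "(\<lambda>\<theta>. ennreal (prior_density p n \<theta> * D \<theta> X)) \<in> borel_measurable (Rp p)" for X
      unfolding D_def prior_density_def likelihood_def by measurable
    ultimately show ?thesis
      using C by (simp add: nn_integral_cmult[symmetric] ennreal_mult' mult.left_commute)
  qed
  also have "\<dots> \<le> C * ennreal ((1 / 2) ^ p)"
    using nn_integral_joint_damped_le[OF n a] unfolding D_def L_def
    by (intro mult_left_mono) (simp_all add: mult.assoc)
  finally show ?thesis
    using C by (simp add: L_def C_def ennreal_mult)
qed

lemma exp_3_16_half_power_lt:
  assumes "1 \<le> p"
  shows "exp (3 * real p / 16) * (1 / 2) ^ p < (4 / 5 :: real)"
proof -
  define q where "q = exp (3 / 16 :: real) / 2"
  have "exp (3 / 16 :: real) \<le> 1 + 2 * (3 / 16)"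
    using exp_bound_lemma[of "3 / 16 :: real"] by simp
  then have q: "0 \<le> q" "q \<le> 11 / 16"
    by (simp_all add: q_def)
  have "exp (3 * real p / 16) * (1 / 2) ^ p = q ^ p"
    by (simp add: q_def power_divide exp_of_nat_mult[symmetric])
  also have "\<dots> \<le> q"
    using q assms by (simp add: power_le_one_iff power_decreasing[of 1 p q, simplified])
  also have "\<dots> < 4 / 5"
    using q by simp
  finally show ?thesis .
qed

lemma gauss_location_lower_bound:
  assumes p: "1 \<le> p" and n: "1 \<le> n" and a[measurable]: "a \<in> PiM {..<n} (\<lambda>_. Rp p) \<rightarrow>\<^sub>M Rp p"
  shows "\<exists>\<theta>\<in>space (Rp p). 1 / 5 \<le> measure (sample n (gauss p \<theta>))
    {X \<in> space (sample n (gauss p \<theta>)). 1 / 4 * sqrt (real p / real n) \<le> euclid_dist p \<theta> (a X)}"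
proof (rule ccontr)
  define r where "r = 1 / 4 * sqrt (real p / real n)"
  let ?near = "\<lambda>\<theta>. {X \<in> space (PiM {..<n} (\<lambda>_. Rp p)). euclid_dist p \<theta> (a X) < r}"
  assume "\<not> ?thesis"
  then have far: "measure (sample n (gauss p \<theta>)) {X \<in> space (sample n (gauss p \<theta>)). r \<le> euclid_dist p \<theta> (a X)} < 1 / 5"
    if "\<theta> \<in> space (Rp p)" for \<theta>
    using that by (auto simp: r_def not_le)
  have near: "ennreal (4 / 5) \<le> emeasure (sample n (gauss p \<theta>)) (?near \<theta>)" if "\<theta> \<in> space (Rp p)" for \<theta>
  proof -
    interpret prob_space "sample n (gauss p \<theta>)"
      by (intro prob_space_sample prob_space_gauss)
    have space: "space (sample n (gauss p \<theta>)) = space (PiM {..<n} (\<lambda>_. Rp p))"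
      by (rule space_sample[OF sets_gauss])
    have "{X \<in> space (sample n (gauss p \<theta>)). r \<le> euclid_dist p \<theta> (a X)} \<in> events"
      unfolding sets_sample[OF sets_gauss] space euclid_dist_def by measurable
    then have "prob (?near \<theta>) = 1 - prob {X \<in> space (sample n (gauss p \<theta>)). r \<le> euclid_dist p \<theta> (a X)}"
      by (subst prob_compl[symmetric]) (auto simp: space intro!: arg_cong[where f = prob])
    then show ?thesis
      using far[OF that] by (simp add: emeasure_eq_measure ennreal_leI)
  qed
  interpret prior: prob_space "density (Rp p) (prior_density p n)"
    using n by (intro prob_space_prior) simp
  have "ennreal (4 / 5) = (\<integral>\<^sup>+\<theta>. ennreal (4 / 5) \<partial>density (Rp p) (prior_density p n))"
    using prior.emeasure_space_1 by simp
  also have "\<dots> \<le> (\<integral>\<^sup>+\<theta>. emeasure (sample n (gauss p \<theta>)) (?near \<theta>) \<partial>density (Rp p) (prior_density p n))"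
    using near by (intro nn_integral_mono) simp
  also have "\<dots> \<le> ennreal (exp (3 * real n * r\<^sup>2) * (1 / 2) ^ p)"
    using n a by (intro bayes_prob_near_le) simp_all
  also have "3 * real n * r\<^sup>2 = 3 * real p / 16"
    using n by (simp add: r_def power_mult_distrib power_divide)
  also have "ennreal (exp (3 * real p / 16) * (1 / 2) ^ p) < ennreal (4 / 5)"
    using exp_3_16_half_power_lt[OF p] by (simp add: ennreal_lessI)
  finally show False
    by simp
qed

lemma (in prob_space) prob_far_from_two_points:
  assumes r: "2 * r \<le> euclid_dist p \<theta>\<^sub>1 \<theta>\<^sub>0"
    and events: "{x \<in> space M. r \<le> euclid_dist p \<theta>\<^sub>0 (g x)} \<in> events"
      "{x \<in> space M. r \<le> euclid_dist p \<theta>\<^sub>1 (g x)} \<in> events"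
  shows "1 \<le> prob {x \<in> space M. r \<le> euclid_dist p \<theta>\<^sub>0 (g x)} + prob {x \<in> space M. r \<le> euclid_dist p \<theta>\<^sub>1 (g x)}"
proof -
  have triangle: "euclid_dist p \<theta>\<^sub>1 \<theta>\<^sub>0 \<le> euclid_dist p \<theta>\<^sub>1 (g x) + euclid_dist p \<theta>\<^sub>0 (g x)" for x
    using euclid_dist_triangle[of p \<theta>\<^sub>1 \<theta>\<^sub>0 "g x"] euclid_dist_commute[of p "g x" \<theta>\<^sub>0] by simp
  have "r \<le> euclid_dist p \<theta>\<^sub>0 (g x) \<or> r \<le> euclid_dist p \<theta>\<^sub>1 (g x)" for x
    using r triangle[of x] by linarith
  then have "space M = {x \<in> space M. r \<le> euclid_dist p \<theta>\<^sub>0 (g x)} \<union> {x \<in> space M. r \<le> euclid_dist p \<theta>\<^sub>1 (g x)}"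
    by auto
  then show ?thesis
    using measure_subadditive[OF events] prob_space by simp
qed

lemma contamination_lower_bound:
  assumes p: "1 \<le> p" and \<epsilon>: "0 < \<epsilon>" and a[measurable]: "a \<in> PiM {..<n} (\<lambda>_. Rp p) \<rightarrow>\<^sub>M Rp p"
  shows "\<exists>\<theta>\<in>space (Rp p). \<exists>P\<in>robust_model p \<theta> \<epsilon>. 1 / 5 \<le> measure (sample n P)
    {X \<in> space (sample n P). 1 / 4 * \<epsilon> \<le> euclid_dist p \<theta> (a X)}"
proof -
  define \<theta>\<^sub>0 \<theta>\<^sub>1 where "\<theta>\<^sub>0 = (\<lambda>i\<in>{..<p}. 0 :: real)" and "\<theta>\<^sub>1 = (\<lambda>i\<in>{..<p}. if i = 0 then \<epsilon> else 0)"
  define P where "P = gauss p \<theta>\<^sub>0"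
  define far where "far \<theta> = {X \<in> space (sample n P). 1 / 4 * \<epsilon> \<le> euclid_dist p \<theta> (a X)}" for \<theta>
  have \<theta>: "\<theta>\<^sub>0 \<in> space (Rp p)" "\<theta>\<^sub>1 \<in> space (Rp p)"
    by (simp_all add: \<theta>\<^sub>0_def \<theta>\<^sub>1_def space_Rp)
  have "(\<Sum>i<p. (\<theta>\<^sub>1 i - \<theta>\<^sub>0 i)\<^sup>2) = (\<Sum>i<p. if i = 0 then \<epsilon>\<^sup>2 else 0)"
    by (intro sum.cong) (simp_all add: \<theta>\<^sub>0_def \<theta>\<^sub>1_def)
  also have "\<dots> = \<epsilon>\<^sup>2"
    using p by simp
  finally have dist: "euclid_dist p \<theta>\<^sub>1 \<theta>\<^sub>0 = \<epsilon>"
    using \<epsilon> by (simp add: euclid_dist_def)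
  have P\<^sub>0: "P \<in> robust_model p \<theta>\<^sub>0 \<epsilon>"
    using \<epsilon> by (simp add: P_def gauss_in_robust_model)
  have P\<^sub>1: "P \<in> robust_model p \<theta>\<^sub>1 \<epsilon>"
    using wasserstein1_gauss_le[of p \<theta>\<^sub>1 \<theta>\<^sub>0]
    by (simp add: P_def robust_model_def prob_space_gauss sets_gauss dist)
  interpret prob_space "sample n P"
    by (simp add: P_def prob_space_sample prob_space_gauss)
  have "far \<theta> \<in> events" for \<theta>
    unfolding far_def P_def space_sample[OF sets_gauss] sets_sample[OF sets_gauss] euclid_dist_def
    by measurable
  then have "1 \<le> prob (far \<theta>\<^sub>0) + prob (far \<theta>\<^sub>1)"
    unfolding far_def using \<epsilon> dist by (intro prob_far_from_two_points) simp_all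
  then have "1 / 5 \<le> prob (far \<theta>\<^sub>0) \<or> 1 / 5 \<le> prob (far \<theta>\<^sub>1)"
    by linarith
  then show ?thesis
    using \<theta> P\<^sub>0 P\<^sub>1 unfolding far_def by blast
qed

lemma robust_location_lower_bound:
  assumes "1 \<le> p" "1 \<le> n" "0 \<le> \<epsilon>" and "a \<in> PiM {..<n} (\<lambda>_. Rp p) \<rightarrow>\<^sub>M Rp p"
  shows "\<exists>\<theta>\<in>space (Rp p). \<exists>P\<in>robust_model p \<theta> \<epsilon>. 1 / 5 \<le> measure (sample n P)
    {X \<in> space (sample n P). 1 / 4 * max (sqrt (real p / real n)) \<epsilon> \<le> euclid_dist p \<theta> (a X)}"
proof (cases "\<epsilon> \<le> sqrt (real p / real n)")
  case True
  then show ?thesis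
    using gauss_location_lower_bound[OF assms(1,2,4)] gauss_in_robust_model[OF assms(3)]
    by (fastforce simp: max_def)
next
  case False
  then have "0 < \<epsilon>"
    by (meson not_le order.strict_trans1 real_sqrt_ge_zero divide_nonneg_nonneg of_nat_0_le_iff)
  with False show ?thesis
    using contamination_lower_bound[OF assms(1) _ assms(4)] by (simp add: max_def)
qed

lemma minimax_lower_bound:
  fixes R :: "'e \<Rightarrow> 't \<Rightarrow> 'm \<Rightarrow> real"
  assumes "E \<noteq> {}" and "\<And>\<theta>. \<theta> \<in> T \<Longrightarrow> M \<theta> \<noteq> {}"
    and bounded: "\<And>e \<theta> P. e \<in> E \<Longrightarrow> \<theta> \<in> T \<Longrightarrow> P \<in> M \<theta> \<Longrightarrow> R e \<theta> P \<le> B"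
    and hard: "\<And>e. e \<in> E \<Longrightarrow> \<exists>\<theta>\<in>T. \<exists>P\<in>M \<theta>. c \<le> R e \<theta> P"
  shows "c \<le> (INF e\<in>E. SUP \<theta>\<in>T. SUP P\<in>M \<theta>. R e \<theta> P)"
proof (rule cINF_greatest[OF assms(1)])
  fix e assume e: "e \<in> E"
  then obtain \<theta> P where "\<theta> \<in> T" "P \<in> M \<theta>" "c \<le> R e \<theta> P"
    using hard by blast
  moreover have "bdd_above ((\<lambda>P. R e \<theta> P) ` M \<theta>)" if "\<theta> \<in> T" for \<theta>
    using bounded[OF e that] by (rule bdd_aboveI2)
  moreover have "bdd_above ((\<lambda>\<theta>. SUP P\<in>M \<theta>. R e \<theta> P) ` T)"
    using assms(2) bounded e by (intro bdd_aboveI2[where M = B] cSUP_least) auto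
  ultimately show "c \<le> (SUP \<theta>\<in>T. SUP P\<in>M \<theta>. R e \<theta> P)"
    by (meson cSUP_upper2)
qed

theorem theorem5:
  shows "\<exists>C>0. \<exists>c>0. \<forall>(p::nat) (n::nat) (\<epsilon>::real). p \<ge> 1 \<longrightarrow> n \<ge> 1 \<longrightarrow> \<epsilon> \<ge> 0 \<longrightarrow>
    (INF \<theta>h \<in> estimators p n.
       SUP \<theta> \<in> space (Rp p). SUP P \<in> robust_model p \<theta> \<epsilon>.
         measure (sample n P)
           {X \<in> space (sample n P).
              C * max (sqrt (real p / real n)) \<epsilon> \<le> euclid_dist p \<theta> (\<theta>h X)}) \<ge> c"
proof (rule exI[of _ "1 / 4"], intro conjI exI[of _ "1 / 5"] allI impI)
  fix p n :: nat and \<epsilon> :: real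
  assume p: "p \<ge> 1" and n: "n \<ge> 1" and \<epsilon>: "\<epsilon> \<ge> 0"
  show "(INF \<theta>h \<in> estimators p n. SUP \<theta> \<in> space (Rp p). SUP P \<in> robust_model p \<theta> \<epsilon>.
      measure (sample n P) {X \<in> space (sample n P).
        1 / 4 * max (sqrt (real p / real n)) \<epsilon> \<le> euclid_dist p \<theta> (\<theta>h X)}) \<ge> 1 / 5"
  proof (rule minimax_lower_bound[where B = 1])
    have "(\<lambda>_. \<lambda>i\<in>{..<p}. 0) \<in> estimators p n"
      by (simp add: estimators_def space_Rp)
    then show "estimators p n \<noteq> {}"
      by blast
    show "robust_model p \<theta> \<epsilon> \<noteq> {}" if "\<theta> \<in> space (Rp p)" for \<theta>
      using gauss_in_robust_model[OF \<epsilon>] by blast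
    show "measure (sample n P) S \<le> 1"
      if "\<theta>h \<in> estimators p n" "\<theta> \<in> space (Rp p)" "P \<in> robust_model p \<theta> \<epsilon>" for \<theta>h \<theta> P S
      using that(3) by (intro prob_space.prob_le_1 prob_space_sample) (simp add: robust_model_def)
    show "\<exists>\<theta>\<in>space (Rp p). \<exists>P\<in>robust_model p \<theta> \<epsilon>. 1 / 5 \<le> measure (sample n P)
        {X \<in> space (sample n P). 1 / 4 * max (sqrt (real p / real n)) \<epsilon> \<le> euclid_dist p \<theta> (\<theta>h X)}"
      if "\<theta>h \<in> estimators p n" for \<theta>h
      using robust_location_lower_bound[OF p n \<epsilon>] that by (simp add: estimators_def)
  qed
qed simp_all

end
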